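(* Let $s,t\in\mathbb N$. If $s>t$ then $\hom_{\Bbbk\mathbf{FA}}(\overline P^{\otimes s},\overline P^{\otimes t})=0$. If $s=t$, the place-permutation action of $\mathfrak S_t$ on $\overline P^{\otimes t}$ induces an isomorphism of $\Bbbk$-algebras $\Bbbk\mathfrak S_t\cong\mathrm{End}_{\Bbbk\mathbf{FA}}(\overline P^{\otimes t})$.
   Context: Let $\Bbbk$ be a field. $\mathbf{FA}$ denotes the category of finite sets and all maps, and $\mathbf{FI}$, $\mathbf{FS}$, $\mathbf{FB}$ its wide subcategories of injections, surjections and bijections respectively; $\mathbf n=\{1,\dots,n\}$ for $n\in\mathbb N$ ($\mathbf 0=\emptyset$), and $\mathfrak S_n$ is the symmetric group. For a category $\mathcal C$, $\Bbbk\mathcal C(X,Y)$ is the $\Bbbk$-vector space with basis $\mathcal C(X,Y)$. A $\Bbbk\mathbf{FA}$-module is a functor from $\mathbf{FA}$ to $\Bbbk$-vector spaces (these form the abelian category $\mathcal F(\mathbf{FA})$); $\otimes$ denotes the pointwise tensor product over $\Bbbk$, and $\hom_{\Bbbk\mathbf{FA}}$ denotes natural transformations. $P^{\mathbf{FA}}_{\mathbf n}:=\Bbbk\mathbf{FA}(\mathbf n,-)$, so $P^{\mathbf{FA}}_{\mathbf n}(X)\cong\Bbbk[X]^{\otimes n}$ (where $\Bbbk[X]$ has basis $\{[x]:x\in X\}$), with the right $\mathfrak S_n$-action by precomposition, equivalently place permutation of tensor factors; write $P^{\mathbf{FA}}:=P^{\mathbf{FA}}_{\mathbf 1}$. Let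 $\overline{\Bbbk}$ be the functor with value $\Bbbk$ on non-empty sets (all maps acting by the identity) and $0$ on $\emptyset$, and $\Bbbk_{\mathbf 0}$ the functor with value $\Bbbk$ on $\emptyset$ and $0$ on non-empty sets. $\overline P$ is the kernel of the surjection $P^{\mathbf{FA}}\to\overline\Bbbk$, $[x]\mapsto 1$; thus $\overline P(X)=\{\sum_x a_x[x]:\sum_x a_x=0\}$. For $n\ge1$, $\overline P^{\otimes n}$ is the $n$-fold pointwise tensor power, a subfunctor of $P^{\mathbf{FA}}_{\mathbf n}$ stable under the place-permutation right action of $\mathfrak S_n$; by convention $\overline P^{\otimes 0}:=\overline\Bbbk$. *)

theory Defs
  imports "HOL-Combinatorics.Permutations"
begin

(* Skeleton of FA: objects n = {0..<n}; a map n -> m is f :: nat => nat with f ` {..<n} <= {..<m}.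
   An element of P_s(n) = k[n]^{(x)s} is a function on s-tuples (lists of length s with entries < n);
   the basis tensor [x1] (x) ... (x) [xs] corresponds to the list [x1,...,xs]. *)

definition Pbar :: "nat \<Rightarrow> (nat \<Rightarrow> 'k::field) set" where
  "Pbar n = {a. (\<forall>x\<ge>n. a x = 0) \<and> (\<Sum>x<n. a x) = 0}"

definition pure_tensor :: "(nat \<Rightarrow> 'k::field) list \<Rightarrow> nat list \<Rightarrow> 'k" where
  "pure_tensor vs xs = (if length xs = length vs then (\<Prod>i<length vs. (vs ! i) (xs ! i)) else 0)"

inductive_set span_set :: "(nat list \<Rightarrow> 'k::field) set \<Rightarrow> (nat list \<Rightarrow> 'k) set"
  for S where
  zero: "(\<lambda>_. 0) \<in> span_set S"
| base: "v \<in> S \<Longrightarrow> v \<in> span_set S"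
| add: "v \<in> span_set S \<Longrightarrow> w \<in> span_set S \<Longrightarrow> (\<lambda>xs. v xs + w xs) \<in> span_set S"
| smult: "v \<in> span_set S \<Longrightarrow> (\<lambda>xs. c * v xs) \<in> span_set S"

(* \<overline>P^{(x)s}(n), with the convention \<overline>P^{(x)0} = \<overline>k *)
definition Pbar_tensor :: "nat \<Rightarrow> nat \<Rightarrow> (nat list \<Rightarrow> 'k::field) set" where
  "Pbar_tensor s n =
     (if s = 0 then (if n = 0 then {\<lambda>_. 0} else {v. \<forall>xs. xs \<noteq> [] \<longrightarrow> v xs = 0})
      else span_set {pure_tensor vs | vs. length vs = s \<and> (\<forall>i<s. vs ! i \<in> Pbar n)})"

definition FAmap :: "nat \<Rightarrow> nat \<Rightarrow> (nat \<Rightarrow> nat) \<Rightarrow> (nat list \<Rightarrow> 'k::field) \<Rightarrow> nat list \<Rightarrow> 'k" where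
  "FAmap s n f v = (\<lambda>ys. \<Sum>xs \<in> {xs. length xs = s \<and> set xs \<subseteq> {..<n} \<and> map f xs = ys}. v xs)"

definition is_nat_trans :: "nat \<Rightarrow> nat \<Rightarrow> (nat \<Rightarrow> (nat list \<Rightarrow> 'k::field) \<Rightarrow> nat list \<Rightarrow> 'k) \<Rightarrow> bool" where
  "is_nat_trans s t \<phi> \<longleftrightarrow>
     (\<forall>n. (\<forall>v\<in>Pbar_tensor s n. \<phi> n v \<in> Pbar_tensor t n)
        \<and> (\<forall>v\<in>Pbar_tensor s n. \<forall>w\<in>Pbar_tensor s n. \<phi> n (\<lambda>xs. v xs + w xs) = (\<lambda>xs. \<phi> n v xs + \<phi> n w xs))
        \<and> (\<forall>c. \<forall>v\<in>Pbar_tensor s n. \<phi> n (\<lambda>xs. c * v xs) = (\<lambda>xs. c * \<phi> n v xs)))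
   \<and> (\<forall>n m f. f ` {..<n} \<subseteq> {..<m} \<longrightarrow>
        (\<forall>v\<in>Pbar_tensor s n. \<phi> m (FAmap s n f v) = FAmap t n f (\<phi> n v)))"

definition perms :: "nat \<Rightarrow> (nat \<Rightarrow> nat) set" where
  "perms t = {\<sigma>. \<sigma> permutes {..<t}}"

definition kS :: "nat \<Rightarrow> ((nat \<Rightarrow> nat) \<Rightarrow> 'k::field) set" where
  "kS t = {a. \<forall>\<sigma>. \<sigma> \<notin> perms t \<longrightarrow> a \<sigma> = 0}"

(* product: sigma * tau := tau o sigma (convention matching the right action) *)
definition kS_mult :: "nat \<Rightarrow> ((nat \<Rightarrow> nat) \<Rightarrow> 'k::field) \<Rightarrow> ((nat \<Rightarrow> nat) \<Rightarrow> 'k) \<Rightarrow> (nat \<Rightarrow> nat) \<Rightarrow> 'k" where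
  "kS_mult t a b = (\<lambda>\<pi>. \<Sum>\<sigma>\<in>perms t. \<Sum>\<tau>\<in>perms t. if \<tau> \<circ> \<sigma> = \<pi> then a \<sigma> * b \<tau> else 0)"

definition kS_one :: "(nat \<Rightarrow> nat) \<Rightarrow> 'k::field" where
  "kS_one = (\<lambda>\<sigma>. if \<sigma> = id then 1 else 0)"

(* place permutation (right action by precomposition): [xs].sigma = [xs o sigma] *)
definition pact :: "nat \<Rightarrow> (nat \<Rightarrow> nat) \<Rightarrow> (nat list \<Rightarrow> 'k::field) \<Rightarrow> nat list \<Rightarrow> 'k" where
  "pact t \<sigma> v = (\<lambda>ys. if length ys = t then v (map (\<lambda>j. ys ! inv \<sigma> j) [0..<t]) else 0)"

definition rho :: "nat \<Rightarrow> ((nat \<Rightarrow> nat) \<Rightarrow> 'k::field) \<Rightarrow> nat \<Rightarrow> (nat list \<Rightarrow> 'k) \<Rightarrow> nat list \<Rightarrow> 'k" where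
  "rho t a n v = (\<lambda>ys. \<Sum>\<sigma>\<in>perms t. a \<sigma> * pact t \<sigma> v ys)"

end

theory Submission
  imports Defs
begin

text \<open>
  The tensor \<open>\<gamma>\<^sub>s = \<Otimes>\<^sub>i ([2i] - [2i+1]) \<in> P\<^sup>\<otimes>\<^sup>s(2s)\<close> generates \<open>\<overline>P\<^sup>\<otimes>\<^sup>s\<close>:
  since the coefficients of an element of \<open>\<overline>P(n)\<close> sum to zero, every pure tensor is a linear
  combination of images of \<open>\<gamma>\<^sub>s\<close> under maps \<open>2s \<rightarrow> n\<close>. A natural transformation \<open>\<phi>\<close> is
  therefore determined by \<open>\<phi>(\<gamma>\<^sub>s)\<close>. Collapsing the pair \<open>{2i, 2i+1}\<close> kills \<open>\<gamma>\<^sub>s\<close>, so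
  every tuple in the support of \<open>\<phi>(\<gamma>\<^sub>s) \<in> P\<^sup>\<otimes>\<^sup>t(2s)\<close> meets every pair; for \<open>s > t\<close> there is
  no such tuple. For \<open>s = t\<close> such a tuple meets each pair exactly once, and swapping the
  elements of some pairs multiplies \<open>\<gamma>\<^sub>t\<close> by a sign, so \<open>\<phi>(\<gamma>\<^sub>t)\<close> is determined by its values
  on the tuples \<open>(2\<pi>(0), \<dots>, 2\<pi>(t-1))\<close>, \<open>\<pi> \<in> \<frak>S\<^sub>t\<close>. These values are the coefficients of
  the element of \<open>\<Bbbk>\<frak>S\<^sub>t\<close> acting as \<open>\<phi>\<close>.
\<close>

definition lists_in :: "nat \<Rightarrow> (nat \<Rightarrow> 'a set) \<Rightarrow> 'a list set" where
  "lists_in s A = {xs. length xs = s \<and> (\<forall>i<s. xs!i \<in> A i)}"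

lemma lists_in_0: "lists_in 0 A = {[]}"
  unfolding lists_in_def by auto

lemma lists_in_Suc:
  "lists_in (Suc s) A = (\<lambda>(x, xs). x # xs) ` (A 0 \<times> lists_in s (\<lambda>i. A (Suc i)))"
proof (rule set_eqI, rule iffI)
  fix ys assume "ys \<in> lists_in (Suc s) A"
  then obtain x xs where "ys = x # xs" "length xs = s" "\<forall>i<Suc s. ys!i \<in> A i"
    unfolding lists_in_def by (cases ys) auto
  then show "ys \<in> (\<lambda>(x, xs). x # xs) ` (A 0 \<times> lists_in s (\<lambda>i. A (Suc i)))"
    unfolding lists_in_def by (auto intro!: image_eqI[of _ _ "(x, xs)"])
qed (auto simp: lists_in_def less_Suc_eq_0_disj)

lemma sum_lists_in_prod:
  assumes "\<And>i. i < s \<Longrightarrow> finite (A i)"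
  shows "(\<Sum>xs\<in>lists_in s A. \<Prod>i<s. h i (xs!i)) = (\<Prod>i<s. \<Sum>x\<in>A i. (h i x :: 'b::comm_semiring_1))"
  using assms
proof (induction s arbitrary: A h)
  case 0
  then show ?case by (simp add: lists_in_0)
next
  case (Suc s)
  have inj: "inj_on (\<lambda>(x, xs). x # xs) (A 0 \<times> lists_in s (\<lambda>i. A (Suc i)))"
    by (auto simp: inj_on_def)
  have "(\<Sum>xs\<in>lists_in (Suc s) A. \<Prod>i<Suc s. h i (xs!i))
      = (\<Sum>(x, xs)\<in>A 0 \<times> lists_in s (\<lambda>i. A (Suc i)). h 0 x * (\<Prod>i<s. h (Suc i) (xs!i)))"
    unfolding lists_in_Suc
    by (subst sum.reindex[OF inj]) (simp add: case_prod_beta prod.lessThan_Suc_shift del: prod.lessThan_Suc)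
  also have "\<dots> = (\<Sum>x\<in>A 0. h 0 x) * (\<Sum>xs\<in>lists_in s (\<lambda>i. A (Suc i)). \<Prod>i<s. h (Suc i) (xs!i))"
    by (simp add: sum_product sum.cartesian_product)
  also have "\<dots> = (\<Prod>i<Suc s. \<Sum>x\<in>A i. h i x)"
    using Suc.IH[of "\<lambda>i. A (Suc i)" "\<lambda>i. h (Suc i)"] Suc.prems
    by (simp add: prod.lessThan_Suc_shift del: prod.lessThan_Suc)
  finally show ?case .
qed

definition tensor_fun :: "nat \<Rightarrow> (nat \<Rightarrow> nat \<Rightarrow> 'k::field) \<Rightarrow> nat list \<Rightarrow> 'k" where
  "tensor_fun s F = (\<lambda>ys. if length ys = s then (\<Prod>i<s. F i (ys!i)) else 0)"

definition pushforward :: "nat \<Rightarrow> (nat \<Rightarrow> nat) \<Rightarrow> (nat \<Rightarrow> 'k::field) \<Rightarrow> nat \<Rightarrow> 'k" where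
  "pushforward n f v = (\<lambda>y. \<Sum>x\<in>{x. x < n \<and> f x = y}. v x)"

definition basis_diff :: "nat \<Rightarrow> nat \<Rightarrow> nat \<Rightarrow> 'k::field" where
  "basis_diff a b = (\<lambda>x. (if x = a then 1 else 0) - (if x = b then 1 else 0))"

lemma pure_tensor_eq_tensor_fun: "pure_tensor vs = tensor_fun (length vs) (\<lambda>i. vs!i)"
  unfolding pure_tensor_def tensor_fun_def by auto

lemma FAmap_fibre_eq_lists_in:
  assumes "length ys = s"
  shows "{xs. length xs = s \<and> set xs \<subseteq> {..<n} \<and> map f xs = ys}
       = lists_in s (\<lambda>i. {x. x < n \<and> f x = ys!i})"
  using assms unfolding lists_in_def
  by (auto simp: list_eq_iff_nth_eq set_conv_nth) fastforce+

lemma FAmap_outside: "length ys \<noteq> s \<Longrightarrow> FAmap s n f v ys = 0"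
  unfolding FAmap_def by (metis (mono_tags, lifting) empty_Collect_eq length_map sum.empty)

lemma FAmap_tensor_fun: "FAmap s n f (tensor_fun s F) = tensor_fun s (\<lambda>i. pushforward n f (F i))"
proof
  fix ys
  show "FAmap s n f (tensor_fun s F) ys = tensor_fun s (\<lambda>i. pushforward n f (F i)) ys"
  proof (cases "length ys = s")
    case True
    have "FAmap s n f (tensor_fun s F) ys
        = (\<Sum>xs\<in>lists_in s (\<lambda>i. {x. x < n \<and> f x = ys!i}). \<Prod>i<s. F i (xs!i))"
      unfolding FAmap_def FAmap_fibre_eq_lists_in[OF True]
      by (rule sum.cong) (auto simp: tensor_fun_def lists_in_def)
    also have "\<dots> = (\<Prod>i<s. \<Sum>x\<in>{x. x < n \<and> f x = ys!i}. F i x)"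
      by (rule sum_lists_in_prod) auto
    finally show ?thesis
      using True by (simp add: tensor_fun_def pushforward_def)
  qed (simp add: FAmap_outside tensor_fun_def)
qed

lemma pushforward_basis_diff:
  "a < n \<Longrightarrow> b < n \<Longrightarrow> pushforward n f (basis_diff a b) = basis_diff (f a) (f b)"
  unfolding pushforward_def basis_diff_def
  by (auto simp: sum_subtractf fun_eq_iff sum.If_cases Int_def)

lemma tensor_fun_zero_factor: "i < s \<Longrightarrow> F i = (\<lambda>_. 0) \<Longrightarrow> tensor_fun s F = (\<lambda>_. 0)"
  unfolding tensor_fun_def by (auto intro!: ext prod_zero bexI[where x=i])

lemma tensor_fun_scale:
  "tensor_fun s (\<lambda>i x. e i * F i x) = (\<lambda>ys. (\<Prod>i<s. e i) * tensor_fun s F ys)"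
  unfolding tensor_fun_def by (auto simp: prod.distrib)

lemma FAmap_sum:
  "FAmap s n f (\<lambda>xs. \<Sum>k\<in>K. c k * F k xs) = (\<lambda>ys. \<Sum>k\<in>K. c k * FAmap s n f (F k) ys)"
  unfolding FAmap_def by (auto simp: fun_eq_iff sum_distrib_left intro: sum.swap)

lemma FAmap_0: "FAmap 0 m f w = (\<lambda>ys. if ys = [] then w [] else 0)"
proof
  fix ys
  have "{xs. length xs = 0 \<and> set xs \<subseteq> {..<m} \<and> map f xs = ys} = (if ys = [] then {[]} else {})"
    by auto
  then show "FAmap 0 m f w ys = (if ys = [] then w [] else 0)"
    unfolding FAmap_def by simp
qed

lemma basis_diff_in_Pbar: "a < n \<Longrightarrow> b < n \<Longrightarrow> basis_diff a b \<in> Pbar n"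
  unfolding Pbar_def basis_diff_def by (auto simp: sum_subtractf)

lemma tensor_fun_in_Pbar_tensor:
  assumes "0 < s" "\<And>i. i < s \<Longrightarrow> F i \<in> Pbar n"
  shows "tensor_fun s F \<in> Pbar_tensor s n"
proof -
  have "tensor_fun s F = pure_tensor (map F [0..<s])"
    by (auto simp: pure_tensor_eq_tensor_fun tensor_fun_def intro!: ext prod.cong)
  then show ?thesis
    using assms unfolding Pbar_tensor_def by (auto intro!: span_set.base)
qed

lemma Pbar_tensor_zero: "(\<lambda>_. 0) \<in> Pbar_tensor s n"
  unfolding Pbar_tensor_def by (auto intro: span_set.zero)

lemma Pbar_tensor_add:
  "v \<in> Pbar_tensor s n \<Longrightarrow> w \<in> Pbar_tensor s n \<Longrightarrow> (\<lambda>xs. v xs + w xs) \<in> Pbar_tensor s n"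
  unfolding Pbar_tensor_def by (auto split: if_splits intro: span_set.add)

lemma Pbar_tensor_smult: "v \<in> Pbar_tensor s n \<Longrightarrow> (\<lambda>xs. c * v xs) \<in> Pbar_tensor s n"
  unfolding Pbar_tensor_def by (auto split: if_splits intro: span_set.smult)

lemma Pbar_tensor_sum:
  "(\<And>k. k \<in> K \<Longrightarrow> F k \<in> Pbar_tensor s n) \<Longrightarrow> (\<lambda>ys. \<Sum>k\<in>K. c k * F k ys) \<in> Pbar_tensor s n"
  by (induction K rule: infinite_finite_induct)
     (simp_all add: Pbar_tensor_zero Pbar_tensor_add Pbar_tensor_smult)

lemma Pbar_tensor_induct [consumes 2, case_names zero pure add smult]:
  assumes "v \<in> Pbar_tensor s n" "0 < s"
    and "P (\<lambda>_. 0)"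
    and "\<And>vs. length vs = s \<Longrightarrow> (\<forall>i<s. vs!i \<in> Pbar n) \<Longrightarrow> P (pure_tensor vs)"
    and "\<And>v w. v \<in> Pbar_tensor s n \<Longrightarrow> w \<in> Pbar_tensor s n \<Longrightarrow> P v \<Longrightarrow> P w \<Longrightarrow>
           P (\<lambda>xs. v xs + w xs)"
    and "\<And>v c. v \<in> Pbar_tensor s n \<Longrightarrow> P v \<Longrightarrow> P (\<lambda>xs. c * v xs)"
  shows "P v"
proof -
  have "v \<in> span_set {pure_tensor vs | vs. length vs = s \<and> (\<forall>i<s. vs!i \<in> Pbar n)}"
    using assms(1,2) unfolding Pbar_tensor_def by simp
  then show ?thesis
  proof (induction v rule: span_set.induct)
    case (add v w)
    then show ?case using assms(2,5) unfolding Pbar_tensor_def by simp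
  next
    case (smult v c)
    then show ?case using assms(2,6) unfolding Pbar_tensor_def by simp
  qed (use assms(3,4) in auto)
qed

lemma Pbar_tensor_support:
  assumes "v \<in> Pbar_tensor s n" "v ys \<noteq> 0"
  shows "length ys = s \<and> (\<forall>i<s. ys!i < n)"
proof (cases "s = 0")
  case True
  then show ?thesis using assms unfolding Pbar_tensor_def by (auto split: if_splits)
next
  case False
  then have "0 < s" by simp
  from assms(1) this assms(2) show ?thesis
  proof (induction v rule: Pbar_tensor_induct)
    case (pure vs)
    then have len: "length ys = s"
      unfolding pure_tensor_def by (auto split: if_splits)
    have "ys!i < n" if "i < s" for i
    proof (rule ccontr)
      assume "\<not> ys!i < n"
      then have "(vs!i) (ys!i) = 0" using pure.hyps(2) that unfolding Pbar_def by auto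
      then have "pure_tensor vs ys = 0"
        using pure.hyps(1) len that unfolding pure_tensor_def by (auto intro!: prod_zero bexI[where x=i])
      then show False using pure.prems by simp
    qed
    then show ?case using len by simp
  next
    case (add v w)
    then show ?case by (cases "v ys = 0") auto
  qed auto
qed

lemma Pbar_tensor_at_0: "0 < s \<Longrightarrow> v \<in> Pbar_tensor s 0 \<Longrightarrow> v = (\<lambda>_. 0)"
  by (rule ext, rule ccontr) (use Pbar_tensor_support in fastforce)

lemma nat_trans_in: "is_nat_trans s t \<phi> \<Longrightarrow> v \<in> Pbar_tensor s n \<Longrightarrow> \<phi> n v \<in> Pbar_tensor t n"
  unfolding is_nat_trans_def by blast

lemma nat_trans_add:
  "is_nat_trans s t \<phi> \<Longrightarrow> v \<in> Pbar_tensor s n \<Longrightarrow> w \<in> Pbar_tensor s n \<Longrightarrow>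
   \<phi> n (\<lambda>xs. v xs + w xs) = (\<lambda>xs. \<phi> n v xs + \<phi> n w xs)"
  unfolding is_nat_trans_def by blast

lemma nat_trans_smult:
  "is_nat_trans s t \<phi> \<Longrightarrow> v \<in> Pbar_tensor s n \<Longrightarrow> \<phi> n (\<lambda>xs. c * v xs) = (\<lambda>xs. c * \<phi> n v xs)"
  unfolding is_nat_trans_def by blast

lemma nat_trans_FAmap:
  "is_nat_trans s t \<phi> \<Longrightarrow> f ` {..<n} \<subseteq> {..<m} \<Longrightarrow> v \<in> Pbar_tensor s n \<Longrightarrow>
   \<phi> m (FAmap s n f v) = FAmap t n f (\<phi> n v)"
  unfolding is_nat_trans_def by blast

lemma nat_trans_zero: "is_nat_trans s t \<phi> \<Longrightarrow> \<phi> n (\<lambda>_. 0) = (\<lambda>_. 0)"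
  using nat_trans_smult[OF _ Pbar_tensor_zero, where c=0] by simp

lemma nat_trans_sum:
  assumes \<phi>: "is_nat_trans s t \<phi>" and F: "\<And>k. k \<in> K \<Longrightarrow> F k \<in> Pbar_tensor s n"
  shows "\<phi> n (\<lambda>ys. \<Sum>k\<in>K. c k * F k ys) = (\<lambda>ys. \<Sum>k\<in>K. c k * \<phi> n (F k) ys)"
  using F
proof (induction K rule: infinite_finite_induct)
  case (insert x K)
  have "\<phi> n (\<lambda>ys. \<Sum>k\<in>insert x K. c k * F k ys)
      = \<phi> n (\<lambda>ys. c x * F x ys + (\<Sum>k\<in>K. c k * F k ys))"
    using insert by simp
  also have "\<dots> = (\<lambda>ys. \<phi> n (\<lambda>ys. c x * F x ys) ys + \<phi> n (\<lambda>ys. \<Sum>k\<in>K. c k * F k ys) ys)"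
    using insert
    by (intro nat_trans_add[OF \<phi>, of "\<lambda>ys. c x * F x ys" n "\<lambda>ys. \<Sum>k\<in>K. c k * F k ys", simplified]
        Pbar_tensor_smult Pbar_tensor_sum) auto
  also have "\<dots> = (\<lambda>ys. \<Sum>k\<in>insert x K. c k * \<phi> n (F k) ys)"
    using insert nat_trans_smult[OF \<phi>, of "F x" n "c x"] by simp
  finally show ?case .
qed (simp_all add: nat_trans_zero[OF \<phi>])

lemma zero_is_nat_trans: "is_nat_trans s t (\<lambda>n v. (\<lambda>_. 0::'k::field))"
  unfolding is_nat_trans_def by (auto simp: Pbar_tensor_zero FAmap_def)

lemma finite_perms: "finite (perms t)"
  unfolding perms_def by (rule finite_permutations) simp

lemma perms_0: "perms 0 = {id}"
  unfolding perms_def by auto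

lemma pact_eq_permute_list:
  "pact t \<sigma> v = (\<lambda>ys. if length ys = t then v (permute_list (inv \<sigma>) ys) else 0)"
  unfolding pact_def permute_list_def by auto

lemma pact_tensor_fun:
  assumes \<sigma>: "\<sigma> permutes {..<t}"
  shows "pact t \<sigma> (tensor_fun t F) = tensor_fun t (\<lambda>i. F (\<sigma> i))"
proof
  fix ys
  have "(\<Prod>j<t. F j (ys ! inv \<sigma> j)) = (\<Prod>i<t. F (\<sigma> i) (ys ! inv \<sigma> (\<sigma> i)))"
    by (subst prod.permute[OF \<sigma>]) (simp add: o_def)
  also have "\<dots> = (\<Prod>i<t. F (\<sigma> i) (ys ! i))"
    by (simp add: permutes_inverses[OF \<sigma>])
  finally show "pact t \<sigma> (tensor_fun t F) ys = tensor_fun t (\<lambda>i. F (\<sigma> i)) ys"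
    unfolding pact_def tensor_fun_def by simp
qed

lemma pact_add: "pact t \<sigma> (\<lambda>xs. v xs + w xs) = (\<lambda>ys. pact t \<sigma> v ys + pact t \<sigma> w ys)"
  unfolding pact_def by auto

lemma pact_smult: "pact t \<sigma> (\<lambda>xs. c * v xs) = (\<lambda>ys. c * pact t \<sigma> v ys)"
  unfolding pact_def by auto

lemma pact_sum:
  "pact t \<sigma> (\<lambda>xs. \<Sum>k\<in>K. c k * F k xs) = (\<lambda>ys. \<Sum>k\<in>K. c k * pact t \<sigma> (F k) ys)"
  unfolding pact_def by (auto simp: fun_eq_iff)

lemma pact_id: "v \<in> Pbar_tensor t n \<Longrightarrow> pact t id v = v"
  unfolding pact_eq_permute_list by (auto intro!: ext dest: Pbar_tensor_support)

lemma pact_pact: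
  assumes "\<sigma> permutes {..<t}" "\<tau> permutes {..<t}"
  shows "pact t \<sigma> (pact t \<tau> v) = pact t (\<tau> \<circ> \<sigma>) v"
proof -
  have compose: "permute_list (inv (\<tau> \<circ> \<sigma>)) ys = permute_list (inv \<tau>) (permute_list (inv \<sigma>) ys)"
    if "length ys = t" for ys :: "nat list"
  proof -
    have "inv (\<tau> \<circ> \<sigma>) = inv \<sigma> \<circ> inv \<tau>"
      by (rule o_inv_distrib[OF permutes_bij[OF assms(2)] permutes_bij[OF assms(1)]])
    then show ?thesis
      using that permutes_inv[OF assms(2)] by (simp add: permute_list_compose)
  qed
  show ?thesis
    unfolding pact_eq_permute_list by (intro ext) (simp add: compose)
qed

lemma pact_in_Pbar_tensor:
  assumes \<sigma>: "\<sigma> \<in> perms t" and v: "v \<in> Pbar_tensor t n"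
  shows "pact t \<sigma> v \<in> Pbar_tensor t n"
proof (cases "t = 0")
  case True
  then show ?thesis using \<sigma> v by (simp add: perms_0 pact_id)
next
  case False
  then have "0 < t" by simp
  have \<sigma>': "\<sigma> permutes {..<t}" using \<sigma> unfolding perms_def by simp
  from v \<open>0 < t\<close> show ?thesis
  proof (induction v rule: Pbar_tensor_induct)
    case zero
    then show ?case by (simp add: pact_def Pbar_tensor_zero flip: Nil_is_map_conv)
  next
    case (pure vs)
    then show ?case
      using permutes_in_image[OF \<sigma>'] \<open>0 < t\<close>
      by (auto simp: pure_tensor_eq_tensor_fun pact_tensor_fun[OF \<sigma>'] intro!: tensor_fun_in_Pbar_tensor)
  qed (simp_all add: pact_add pact_smult Pbar_tensor_add Pbar_tensor_smult)
qed

lemma bij_betw_permute_list_fibres: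
  assumes p: "p permutes {..<t}" and ys: "length ys = t"
  shows "bij_betw (permute_list p)
           {xs. length xs = t \<and> set xs \<subseteq> {..<n} \<and> map f xs = ys}
           {xs. length xs = t \<and> set xs \<subseteq> {..<n} \<and> map f xs = permute_list p ys}"
proof (rule bij_betw_byWitness[where f' = "permute_list (inv p)"])
  have inv_p: "inv p permutes {..<t}" using permutes_inv[OF p] .
  show "\<forall>xs\<in>{xs. length xs = t \<and> set xs \<subseteq> {..<n} \<and> map f xs = ys}.
          permute_list (inv p) (permute_list p xs) = xs"
    using inv_p by (auto simp flip: permute_list_compose simp: permutes_inv_o(1)[OF p])
  show "\<forall>xs\<in>{xs. length xs = t \<and> set xs \<subseteq> {..<n} \<and> map f xs = permute_list p ys}.
          permute_list p (permute_list (inv p) xs) = xs"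
    using p by (auto simp flip: permute_list_compose simp: permutes_inv_o(2)[OF p])
  show "permute_list p ` {xs. length xs = t \<and> set xs \<subseteq> {..<n} \<and> map f xs = ys}
      \<subseteq> {xs. length xs = t \<and> set xs \<subseteq> {..<n} \<and> map f xs = permute_list p ys}"
    using p by (auto simp: permute_list_map)
  show "permute_list (inv p) ` {xs. length xs = t \<and> set xs \<subseteq> {..<n} \<and> map f xs = permute_list p ys}
      \<subseteq> {xs. length xs = t \<and> set xs \<subseteq> {..<n} \<and> map f xs = ys}"
  proof (rule image_subsetI)
    fix xs assume "xs \<in> {xs. length xs = t \<and> set xs \<subseteq> {..<n} \<and> map f xs = permute_list p ys}"
    then have xs: "length xs = t" "set xs \<subseteq> {..<n}" "map f xs = permute_list p ys" by auto
    have "inv p permutes {..<length xs}" using xs inv_p by simp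
    then have "map f (permute_list (inv p) xs) = permute_list (inv p) (permute_list p ys)"
      using xs(3) by (simp flip: permute_list_map)
    also have "\<dots> = ys"
      using inv_p ys by (simp flip: permute_list_compose add: permutes_inv_o(1)[OF p])
    finally show "permute_list (inv p) xs \<in> {xs. length xs = t \<and> set xs \<subseteq> {..<n} \<and> map f xs = ys}"
      using xs inv_p by simp
  qed
qed

lemma pact_FAmap:
  assumes \<sigma>: "\<sigma> permutes {..<t}"
  shows "pact t \<sigma> (FAmap t n f v) = FAmap t n f (pact t \<sigma> v)"
proof
  fix ys
  show "pact t \<sigma> (FAmap t n f v) ys = FAmap t n f (pact t \<sigma> v) ys"
  proof (cases "length ys = t")
    case True
    have "FAmap t n f (pact t \<sigma> v) ys
        = (\<Sum>xs | length xs = t \<and> set xs \<subseteq> {..<n} \<and> map f xs = ys. v (permute_list (inv \<sigma>) xs))"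
      unfolding FAmap_def pact_eq_permute_list by (rule sum.cong) auto
    also have "\<dots> = FAmap t n f v (permute_list (inv \<sigma>) ys)"
      unfolding FAmap_def
      by (rule sum.reindex_bij_betw[OF bij_betw_permute_list_fibres[OF permutes_inv[OF \<sigma>] True]])
    finally show ?thesis
      using True by (simp add: pact_eq_permute_list)
  qed (simp add: pact_def FAmap_outside)
qed

lemma rho_in_Pbar_tensor: "v \<in> Pbar_tensor t n \<Longrightarrow> rho t a n v \<in> Pbar_tensor t n"
  unfolding rho_def by (intro Pbar_tensor_sum pact_in_Pbar_tensor) auto

lemma rho_FAmap: "rho t a m (FAmap t n f v) = FAmap t n f (rho t a n v)"
  unfolding rho_def FAmap_sum by (simp add: pact_FAmap perms_def)

lemma rho_add: "rho t a n (\<lambda>xs. v xs + w xs) = (\<lambda>ys. rho t a n v ys + rho t a n w ys)"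
  unfolding rho_def pact_add by (auto simp: distrib_left sum.distrib)

lemma rho_smult: "rho t a n (\<lambda>xs. c * v xs) = (\<lambda>ys. c * rho t a n v ys)"
  unfolding rho_def pact_smult by (auto simp: sum_distrib_left ac_simps)

lemma rho_is_nat_trans: "is_nat_trans t t (rho t a)"
  unfolding is_nat_trans_def by (auto simp: rho_in_Pbar_tensor rho_add rho_smult rho_FAmap)

lemma rho_kS_one: "v \<in> Pbar_tensor t n \<Longrightarrow> rho t kS_one n v = v"
proof -
  assume v: "v \<in> Pbar_tensor t n"
  have "id \<in> perms t" unfolding perms_def by simp
  then have "rho t kS_one n v = pact t id v"
    unfolding rho_def kS_one_def by (simp add: finite_perms if_distrib[of "\<lambda>c. c * _"] cong: if_cong)
  then show ?thesis using pact_id[OF v] by simp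
qed

lemma rho_linear: "rho t (\<lambda>\<sigma>. a \<sigma> + c * b \<sigma>) n v = (\<lambda>ys. rho t a n v ys + c * rho t b n v ys)"
  unfolding rho_def by (auto simp: distrib_right sum.distrib sum_distrib_left mult.assoc)

lemma rho_kS_mult: "rho t (kS_mult t a b) n v = rho t a n (rho t b n v)"
proof
  fix ys
  let ?P = "perms t"
  have closed: "\<sigma> \<in> ?P \<Longrightarrow> \<tau> \<in> ?P \<Longrightarrow> \<tau> \<circ> \<sigma> \<in> ?P" for \<sigma> \<tau>
    unfolding perms_def by (auto intro: permutes_compose)
  have "rho t (kS_mult t a b) n v ys
      = (\<Sum>\<pi>\<in>?P. \<Sum>\<sigma>\<in>?P. \<Sum>\<tau>\<in>?P. if \<tau> \<circ> \<sigma> = \<pi> then a \<sigma> * b \<tau> * pact t \<pi> v ys else 0)"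
    unfolding rho_def kS_mult_def sum_distrib_right by (intro sum.cong refl) auto
  also have "\<dots> = (\<Sum>\<sigma>\<in>?P. \<Sum>\<tau>\<in>?P. \<Sum>\<pi>\<in>?P. if \<tau> \<circ> \<sigma> = \<pi> then a \<sigma> * b \<tau> * pact t \<pi> v ys else 0)"
    by (subst sum.swap) (rule sum.cong[OF refl], rule sum.swap)
  also have "\<dots> = (\<Sum>\<sigma>\<in>?P. \<Sum>\<tau>\<in>?P. a \<sigma> * b \<tau> * pact t (\<tau> \<circ> \<sigma>) v ys)"
    using closed finite_perms by (intro sum.cong refl) simp
  also have "\<dots> = (\<Sum>\<sigma>\<in>?P. a \<sigma> * (\<Sum>\<tau>\<in>?P. b \<tau> * pact t \<sigma> (pact t \<tau> v) ys))"
    by (intro sum.cong refl) (simp add: sum_distrib_left pact_pact perms_def mult.assoc)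
  also have "\<dots> = rho t a n (rho t b n v) ys"
    unfolding rho_def pact_sum by simp
  finally show "rho t (kS_mult t a b) n v ys = rho t a n (rho t b n v) ys" .
qed

section \<open>A generator of \<open>\<overline>P\<^sup>\<otimes>\<^sup>s\<close>\<close>

definition gen_tensor :: "nat \<Rightarrow> nat list \<Rightarrow> 'k::field" where
  "gen_tensor s = tensor_fun s (\<lambda>i. basis_diff (2*i) (2*i+1))"

lemma gen_tensor_in_Pbar_tensor: "0 < s \<Longrightarrow> gen_tensor s \<in> Pbar_tensor s (2*s)"
  unfolding gen_tensor_def by (rule tensor_fun_in_Pbar_tensor) (auto intro: basis_diff_in_Pbar)

lemma FAmap_gen_tensor:
  assumes "\<And>i. i < s \<Longrightarrow> f (2*i) = a i" "\<And>i. i < s \<Longrightarrow> f (2*i+1) = b i"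
  shows "FAmap s (2*s) f (gen_tensor s) = tensor_fun s (\<lambda>i. basis_diff (a i) (b i))"
proof -
  have "tensor_fun s (\<lambda>i. pushforward (2*s) f (basis_diff (2*i) (2*i+1)))
      = tensor_fun s (\<lambda>i. basis_diff (a i) (b i))"
    unfolding tensor_fun_def using assms by (auto intro!: ext prod.cong simp: pushforward_basis_diff)
  then show ?thesis
    unfolding gen_tensor_def FAmap_tensor_fun .
qed

definition select_map :: "nat \<Rightarrow> nat list \<Rightarrow> nat \<Rightarrow> nat" where
  "select_map s xs x = (if x < 2*s \<and> even x then xs ! (x div 2) else 0)"

lemma FAmap_select_map_gen_tensor:
  "FAmap s (2*s) (select_map s xs) (gen_tensor s) = tensor_fun s (\<lambda>i. basis_diff (xs!i) 0)"
  by (rule FAmap_gen_tensor) (auto simp: select_map_def)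

lemma select_map_range:
  "0 < n \<Longrightarrow> xs \<in> lists_in s (\<lambda>_. {..<n}) \<Longrightarrow> select_map s xs ` {..<2*s} \<subseteq> {..<n}"
  unfolding select_map_def lists_in_def by auto

text \<open>For \<open>v \<in> \<overline>P(n)\<close> we have \<open>v = \<Sum>\<^sub>x v(x) ([x] - [0])\<close>, because the coefficients of \<open>v\<close>
  sum to zero.\<close>

lemma pure_tensor_expansion:
  assumes n: "0 < n" and vs: "length vs = s" "\<forall>i<s. vs!i \<in> Pbar n"
  shows "pure_tensor vs = (\<lambda>ys. \<Sum>xs\<in>lists_in s (\<lambda>_. {..<n}).
            (\<Prod>i<s. (vs!i) (xs!i)) * FAmap s (2*s) (select_map s xs) (gen_tensor s) ys)"
proof
  fix ys
  show "pure_tensor vs ys = (\<Sum>xs\<in>lists_in s (\<lambda>_. {..<n}).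
          (\<Prod>i<s. (vs!i) (xs!i)) * FAmap s (2*s) (select_map s xs) (gen_tensor s) ys)"
  proof (cases "length ys = s")
    case True
    have coordinate: "(\<Sum>x<n. (vs!i) x * basis_diff x 0 y) = (vs!i) y" if i: "i < s" for i y
    proof -
      have "(\<Sum>x<n. (vs!i) x * basis_diff x 0 y)
          = (\<Sum>x<n. (if x = y then (vs!i) x else 0) - (if y = 0 then (vs!i) x else 0))"
        by (rule sum.cong) (auto simp: basis_diff_def)
      also have "\<dots> = (if y < n then (vs!i) y else 0) - (if y = 0 then (\<Sum>x<n. (vs!i) x) else 0)"
        by (simp add: sum_subtractf)
      also have "\<dots> = (vs!i) y"
        using vs i unfolding Pbar_def by auto
      finally show ?thesis .
    qed
    have "(\<Sum>xs\<in>lists_in s (\<lambda>_. {..<n}).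
            (\<Prod>i<s. (vs!i) (xs!i)) * FAmap s (2*s) (select_map s xs) (gen_tensor s) ys)
        = (\<Sum>xs\<in>lists_in s (\<lambda>_. {..<n}). \<Prod>i<s. (vs!i) (xs!i) * basis_diff (xs!i) 0 (ys!i))"
      unfolding FAmap_select_map_gen_tensor using True by (simp add: tensor_fun_def prod.distrib)
    also have "\<dots> = (\<Prod>i<s. \<Sum>x<n. (vs!i) x * basis_diff x 0 (ys!i))"
      by (rule sum_lists_in_prod) auto
    also have "\<dots> = (\<Prod>i<s. (vs!i) (ys!i))"
      by (rule prod.cong) (simp_all add: coordinate)
    finally show ?thesis
      using True vs by (simp add: pure_tensor_def)
  qed (simp add: FAmap_select_map_gen_tensor pure_tensor_def tensor_fun_def vs)
qed

lemma nat_trans_pure_tensor: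
  assumes \<phi>: "is_nat_trans s t \<phi>" and s: "0 < s" and n: "0 < n"
    and vs: "length vs = s" "\<forall>i<s. vs!i \<in> Pbar n"
  shows "\<phi> n (pure_tensor vs) = (\<lambda>ys. \<Sum>xs\<in>lists_in s (\<lambda>_. {..<n}).
            (\<Prod>i<s. (vs!i) (xs!i)) * FAmap t (2*s) (select_map s xs) (\<phi> (2*s) (gen_tensor s)) ys)"
proof -
  have "FAmap s (2*s) (select_map s xs) (gen_tensor s) \<in> Pbar_tensor s n"
    if "xs \<in> lists_in s (\<lambda>_. {..<n})" for xs
    unfolding FAmap_select_map_gen_tensor using that s n
    by (intro tensor_fun_in_Pbar_tensor basis_diff_in_Pbar) (auto simp: lists_in_def)
  then have "\<phi> n (pure_tensor vs) = (\<lambda>ys. \<Sum>xs\<in>lists_in s (\<lambda>_. {..<n}).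
            (\<Prod>i<s. (vs!i) (xs!i)) * \<phi> n (FAmap s (2*s) (select_map s xs) (gen_tensor s)) ys)"
    unfolding pure_tensor_expansion[OF n vs] by (rule nat_trans_sum[OF \<phi>])
  also have "\<dots> = (\<lambda>ys. \<Sum>xs\<in>lists_in s (\<lambda>_. {..<n}).
            (\<Prod>i<s. (vs!i) (xs!i)) * FAmap t (2*s) (select_map s xs) (\<phi> (2*s) (gen_tensor s)) ys)"
    using nat_trans_FAmap[OF \<phi> select_map_range[OF n] gen_tensor_in_Pbar_tensor[OF s]]
    by (auto intro!: ext sum.cong)
  finally show ?thesis .
qed

lemma nat_trans_eqI_gen_tensor:
  assumes \<phi>: "is_nat_trans s t \<phi>" and \<psi>: "is_nat_trans s t \<psi>" and s: "0 < s"
    and eq: "\<phi> (2*s) (gen_tensor s) = \<psi> (2*s) (gen_tensor s)"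
    and v: "v \<in> Pbar_tensor s n"
  shows "\<phi> n v = \<psi> n v"
proof (cases "n = 0")
  case True
  then have "v = (\<lambda>_. 0)" using Pbar_tensor_at_0[OF s] v by simp
  then show ?thesis using nat_trans_zero[OF \<phi>] nat_trans_zero[OF \<psi>] by simp
next
  case False
  then have n: "0 < n" by simp
  from v s show ?thesis
  proof (induction v rule: Pbar_tensor_induct)
    case (pure vs)
    show ?case
      unfolding nat_trans_pure_tensor[OF \<phi> s n pure] nat_trans_pure_tensor[OF \<psi> s n pure] eq ..
  qed (simp_all add: nat_trans_zero[OF \<phi>] nat_trans_zero[OF \<psi>] nat_trans_add[OF \<phi>]
      nat_trans_add[OF \<psi>] nat_trans_smult[OF \<phi>] nat_trans_smult[OF \<psi>])
qed

section \<open>The image of the generator\<close>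

lemma FAmap_singleton_fibre:
  "{xs. length xs = t \<and> set xs \<subseteq> {..<n} \<and> map f xs = ys} = {zs} \<Longrightarrow> FAmap t n f w ys = w zs"
  unfolding FAmap_def by simp

definition collapse_pair :: "nat \<Rightarrow> nat \<Rightarrow> nat" where
  "collapse_pair i x = (if x = 2*i+1 then 2*i else x)"

lemma FAmap_collapse_pair_gen_tensor:
  assumes i: "i < s"
  shows "FAmap s (2*s) (collapse_pair i) (gen_tensor s) = (\<lambda>_. 0)"
proof -
  have "FAmap s (2*s) (collapse_pair i) (gen_tensor s)
      = tensor_fun s (\<lambda>k. basis_diff (2*k) (if k = i then 2*i else 2*k+1))"
    by (rule FAmap_gen_tensor) (auto simp: collapse_pair_def, presburger)
  also have "\<dots> = (\<lambda>_. 0)"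
    by (rule tensor_fun_zero_factor[OF i]) (simp add: basis_diff_def fun_eq_iff)
  finally show ?thesis .
qed

lemma collapse_pair_fibre:
  assumes z: "length z = t" "\<forall>k<t. z!k < n" and avoid: "\<forall>k<t. z!k div 2 \<noteq> i"
  shows "{xs. length xs = t \<and> set xs \<subseteq> {..<n} \<and> map (collapse_pair i) xs = z} = {z}"
proof (intro set_eqI iffI)
  fix xs assume xs: "xs \<in> {xs. length xs = t \<and> set xs \<subseteq> {..<n} \<and> map (collapse_pair i) xs = z}"
  have "xs = z"
  proof (rule nth_equalityI)
    show "length xs = length z" using xs z by auto
    fix k assume k: "k < length xs"
    have "collapse_pair i (xs!k) = z!k" using xs k by auto
    moreover have "z!k div 2 \<noteq> i" using avoid k xs by auto
    ultimately show "xs!k = z!k" unfolding collapse_pair_def by (auto split: if_splits)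
  qed
  then show "xs \<in> {z}" by simp
next
  fix xs assume "xs \<in> {z}"
  moreover have "map (collapse_pair i) z = z"
    using avoid z by (intro nth_equalityI) (auto simp: collapse_pair_def)
  ultimately show "xs \<in> {xs. length xs = t \<and> set xs \<subseteq> {..<n} \<and> map (collapse_pair i) xs = z}"
    using z by (auto simp: set_conv_nth)
qed

text \<open>Collapsing the pair \<open>{2i, 2i+1}\<close> kills \<open>gen_tensor s\<close> but fixes every tuple avoiding
  that pair, so such a tuple is not in the support of \<open>\<phi>(gen_tensor s)\<close>.\<close>

lemma nat_trans_gen_tensor_support:
  fixes \<phi> :: "nat \<Rightarrow> (nat list \<Rightarrow> 'k::field) \<Rightarrow> nat list \<Rightarrow> 'k"
  assumes \<phi>: "is_nat_trans s t \<phi>" and s: "0 < s" and nz: "\<phi> (2*s) (gen_tensor s) z \<noteq> 0"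
  shows "length z = t \<and> (\<forall>k<t. z!k < 2*s) \<and> (\<forall>i<s. \<exists>k<t. z!k div 2 = i)"
proof -
  define w where "w = \<phi> (2*s) (gen_tensor s)"
  have "w \<in> Pbar_tensor t (2*s)"
    unfolding w_def by (rule nat_trans_in[OF \<phi> gen_tensor_in_Pbar_tensor[OF s]])
  from Pbar_tensor_support[OF this] nz have z: "length z = t" "\<forall>k<t. z!k < 2*s"
    unfolding w_def by auto
  have "\<exists>k<t. z!k div 2 = i" if i: "i < s" for i
  proof (rule ccontr)
    assume "\<not> (\<exists>k<t. z!k div 2 = i)"
    then have "FAmap t (2*s) (collapse_pair i) w z = w z"
      using z by (intro FAmap_singleton_fibre collapse_pair_fibre) auto
    moreover have "collapse_pair i ` {..<2*s} \<subseteq> {..<2*s}"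
      unfolding collapse_pair_def by auto
    then have "FAmap t (2*s) (collapse_pair i) w = \<phi> (2*s) (\<lambda>_. 0)"
      unfolding w_def FAmap_collapse_pair_gen_tensor[OF i, symmetric]
      by (rule nat_trans_FAmap[OF \<phi> _ gen_tensor_in_Pbar_tensor[OF s], symmetric])
    then have "FAmap t (2*s) (collapse_pair i) w = (\<lambda>_. 0)"
      by (simp add: nat_trans_zero[OF \<phi>])
    ultimately show False
      using nz unfolding w_def by (metis)
  qed
  then show ?thesis using z by blast
qed

definition swap_pairs :: "nat set \<Rightarrow> nat \<Rightarrow> nat" where
  "swap_pairs D x = (if x div 2 \<in> D then (if even x then x+1 else x-1) else x)"

lemma swap_pairs_swap_pairs [simp]: "swap_pairs D (swap_pairs D x) = x"
proof (cases "even x")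
  case True
  then have "(x+1) div 2 = x div 2" "odd (x+1)" by auto
  then show ?thesis using True unfolding swap_pairs_def by auto
next
  case False
  then have "x \<ge> 1" "(x-1) div 2 = x div 2" "even (x-1)" by (auto elim: oddE)
  then show ?thesis using False unfolding swap_pairs_def by auto
qed

lemma inj_swap_pairs: "inj (swap_pairs D)"
  by (metis swap_pairs_swap_pairs injI)

text \<open>Swapping \<open>2i\<close> and \<open>2i+1\<close> negates the \<open>i\<close>-th factor of \<open>gen_tensor s\<close>; as the swap is
  injective, its fibres are singletons and naturality compares two single coefficients.\<close>

lemma nat_trans_gen_tensor_swap_pairs:
  fixes \<phi> :: "nat \<Rightarrow> (nat list \<Rightarrow> 'k::field) \<Rightarrow> nat list \<Rightarrow> 'k"
  assumes \<phi>: "is_nat_trans s t \<phi>" and s: "0 < s"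
    and z: "length z = t" "\<forall>k<t. z!k < 2*s"
  shows "\<phi> (2*s) (gen_tensor s) z
       = (\<Prod>k<s. if k \<in> D then -1 else 1) * \<phi> (2*s) (gen_tensor s) (map (swap_pairs D) z)"
proof -
  define w where "w = \<phi> (2*s) (gen_tensor s)"
  define \<epsilon> :: 'k where "\<epsilon> = (\<Prod>k<s. if k \<in> D then -1 else 1)"
  have swap_range: "swap_pairs D ` {..<2*s} \<subseteq> {..<2*s}"
    unfolding swap_pairs_def by (auto elim!: evenE oddE)
  have "FAmap s (2*s) (swap_pairs D) (gen_tensor s)
      = tensor_fun s (\<lambda>k. basis_diff (swap_pairs D (2*k)) (swap_pairs D (2*k+1)))"
    by (rule FAmap_gen_tensor) auto
  also have "\<dots> = tensor_fun s (\<lambda>k x. (if k \<in> D then -1 else 1) * basis_diff (2*k) (2*k+1) x)"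
    unfolding tensor_fun_def swap_pairs_def basis_diff_def by (rule ext) (auto intro!: prod.cong)
  also have "\<dots> = (\<lambda>ys. \<epsilon> * gen_tensor s ys)"
    unfolding tensor_fun_scale gen_tensor_def \<epsilon>_def ..
  finally have "FAmap t (2*s) (swap_pairs D) w = (\<lambda>ys. \<epsilon> * w ys)"
    using nat_trans_FAmap[OF \<phi> swap_range gen_tensor_in_Pbar_tensor[OF s]]
      nat_trans_smult[OF \<phi> gen_tensor_in_Pbar_tensor[OF s]]
    unfolding w_def by simp
  moreover have "FAmap t (2*s) (swap_pairs D) w (map (swap_pairs D) z) = w z"
    using z inj_swap_pairs[of D] by (intro FAmap_singleton_fibre) (auto simp: set_conv_nth)
  ultimately have "w z = \<epsilon> * w (map (swap_pairs D) z)"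
    by (metis)
  then show ?thesis unfolding w_def \<epsilon>_def .
qed

definition doubled_tuple :: "nat \<Rightarrow> (nat \<Rightarrow> nat) \<Rightarrow> nat list" where
  "doubled_tuple t \<pi> = map (\<lambda>k. 2 * \<pi> k) [0..<t]"

lemma permutes_eqI: "\<sigma> permutes {..<t} \<Longrightarrow> \<tau> permutes {..<t} \<Longrightarrow> (\<forall>i<t. \<sigma> i = \<tau> i) \<Longrightarrow> \<sigma> = \<tau>"
  by (rule ext) (metis lessThan_iff permutes_not_in)

lemma pact_gen_tensor_doubled_tuple:
  assumes \<sigma>: "\<sigma> permutes {..<t}" and \<tau>: "\<tau> permutes {..<t}"
  shows "pact t \<sigma> (gen_tensor t) (doubled_tuple t \<tau>) = (if \<sigma> = \<tau> then 1 else 0)"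
proof -
  have odd: "2*a \<noteq> 2*b+1" for a b :: nat by presburger
  have "pact t \<sigma> (gen_tensor t) (doubled_tuple t \<tau>) = (\<Prod>i<t. if \<sigma> i = \<tau> i then 1 else 0)"
    unfolding gen_tensor_def pact_tensor_fun[OF \<sigma>] doubled_tuple_def
    by (auto simp: tensor_fun_def basis_diff_def odd intro!: prod.cong)
  also have "\<dots> = (if \<sigma> = \<tau> then 1 else 0)"
  proof (cases "\<sigma> = \<tau>")
    case False
    then obtain i where "i < t" "\<sigma> i \<noteq> \<tau> i" using permutes_eqI[OF \<sigma> \<tau>] by blast
    then show ?thesis using False by (intro trans[OF prod_zero]) auto
  qed simp
  finally show ?thesis .
qed

lemma rho_gen_tensor_doubled_tuple:
  assumes \<tau>: "\<tau> \<in> perms t"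
  shows "rho t a (2*t) (gen_tensor t) (doubled_tuple t \<tau>) = a \<tau>"
proof -
  have "rho t a (2*t) (gen_tensor t) (doubled_tuple t \<tau>)
      = (\<Sum>\<sigma>\<in>perms t. a \<sigma> * (if \<sigma> = \<tau> then 1 else 0))"
    unfolding rho_def using \<tau> by (intro sum.cong refl) (simp add: pact_gen_tensor_doubled_tuple perms_def)
  also have "\<dots> = a \<tau>"
    using \<tau> finite_perms by (simp add: if_distrib cong: if_cong)
  finally show ?thesis .
qed

lemma pair_index_permutes:
  assumes "length z = t" "\<forall>k<t. z!k < 2*t" "\<forall>i<t. \<exists>k<t. z!k div 2 = i"
  obtains \<pi> where "\<pi> permutes {..<t}" "\<forall>k<t. z!k div 2 = \<pi> k"
proof -
  define \<pi> where "\<pi> k = (if k < t then z!k div 2 else k)" for k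
  have img: "\<pi> ` {..<t} = {..<t}"
  proof
    show "\<pi> ` {..<t} \<subseteq> {..<t}" using assms(2) unfolding \<pi>_def by fastforce
    show "{..<t} \<subseteq> \<pi> ` {..<t}" using assms(3) unfolding \<pi>_def by force
  qed
  then have "bij_betw \<pi> {..<t} {..<t}"
    by (simp add: bij_betw_def finite_surj_inj)
  then have "\<pi> permutes {..<t}"
    by (rule bij_imp_permutes) (simp add: \<pi>_def)
  then show ?thesis using that unfolding \<pi>_def by auto
qed

lemma swap_pairs_eq_doubled_tuple:
  assumes z: "length z = t" and \<pi>: "\<pi> permutes {..<t}" and z\<pi>: "\<forall>k<t. z!k div 2 = \<pi> k"
  shows "map (swap_pairs {i. \<exists>k<t. z!k = 2*i+1}) z = doubled_tuple t \<pi>"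
proof (rule nth_equalityI)
  fix k assume "k < length (map (swap_pairs {i. \<exists>k<t. z!k = 2*i+1}) z)"
  then have k: "k < t" using z by simp
  have inj: "\<pi> k' = \<pi> k \<Longrightarrow> k' = k" for k' using permutes_inj[OF \<pi>] by (auto dest: injD)
  show "map (swap_pairs {i. \<exists>k<t. z!k = 2*i+1}) z ! k = doubled_tuple t \<pi> ! k"
  proof (cases "even (z!k)")
    case True
    then have zk: "z!k = 2 * \<pi> k" using z\<pi> k by (metis dvd_mult_div_cancel)
    have "\<not> (\<exists>k'<t. z!k' = 2 * \<pi> k + 1)"
    proof
      assume "\<exists>k'<t. z!k' = 2 * \<pi> k + 1"
      then obtain k' where k': "k' < t" "z!k' = 2 * \<pi> k + 1" by blast
      then have "z!k' div 2 = \<pi> k" by simp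
      then have "\<pi> k' = \<pi> k" using z\<pi> k'(1) by simp
      then have "k' = k" by (rule inj)
      then show False using k'(2) zk by simp
    qed
    then show ?thesis using k z zk unfolding swap_pairs_def doubled_tuple_def by auto
  next
    case False
    then have "z!k = 2 * \<pi> k + 1" using z\<pi> k by (metis odd_two_times_div_two_succ)
    then show ?thesis using k z unfolding swap_pairs_def doubled_tuple_def by auto
  qed
qed (simp add: z doubled_tuple_def)

lemma nat_trans_gen_tensor_eqI:
  assumes \<phi>: "is_nat_trans t t \<phi>" and \<psi>: "is_nat_trans t t \<psi>" and t: "0 < t"
    and eq: "\<forall>\<pi>\<in>perms t. \<phi> (2*t) (gen_tensor t) (doubled_tuple t \<pi>)
                         = \<psi> (2*t) (gen_tensor t) (doubled_tuple t \<pi>)"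
  shows "\<phi> (2*t) (gen_tensor t) = \<psi> (2*t) (gen_tensor t)"
proof
  fix z
  show "\<phi> (2*t) (gen_tensor t) z = \<psi> (2*t) (gen_tensor t) z"
  proof (cases "length z = t \<and> (\<forall>k<t. z!k < 2*t) \<and> (\<forall>i<t. \<exists>k<t. z!k div 2 = i)")
    case False
    then have "\<phi> (2*t) (gen_tensor t) z = 0" "\<psi> (2*t) (gen_tensor t) z = 0"
      using nat_trans_gen_tensor_support[OF \<phi> t, of z] nat_trans_gen_tensor_support[OF \<psi> t, of z]
      by blast+
    then show ?thesis by simp
  next
    case True
    then obtain \<pi> where \<pi>: "\<pi> permutes {..<t}" "\<forall>k<t. z!k div 2 = \<pi> k"
      using pair_index_permutes by blast
    define D where "D = {i. \<exists>k<t. z!k = 2*i+1}"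
    have doubled: "map (swap_pairs D) z = doubled_tuple t \<pi>"
      unfolding D_def using swap_pairs_eq_doubled_tuple[OF _ \<pi>] True by simp
    show ?thesis
      using nat_trans_gen_tensor_swap_pairs[OF \<phi> t, of z D] nat_trans_gen_tensor_swap_pairs[OF \<psi> t, of z D]
        True eq \<pi>(1) unfolding doubled perms_def by simp
  qed
qed

section \<open>The degenerate case \<open>t = 0\<close>\<close>

definition empty_tuple_indicator :: "nat list \<Rightarrow> 'k::field" where
  "empty_tuple_indicator = (\<lambda>ys. if ys = [] then 1 else 0)"

lemma empty_tuple_indicator_in_Pbar_tensor:
  "0 < n \<Longrightarrow> empty_tuple_indicator \<in> Pbar_tensor 0 n"
  unfolding Pbar_tensor_def empty_tuple_indicator_def by auto

lemma Pbar_tensor_0_eq: "v \<in> Pbar_tensor 0 n \<Longrightarrow> v = (\<lambda>ys. v [] * empty_tuple_indicator ys)"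
  unfolding Pbar_tensor_def empty_tuple_indicator_def by (auto split: if_splits)

lemma rho_0: "v \<in> Pbar_tensor 0 n \<Longrightarrow> rho 0 a n v = (\<lambda>ys. a id * v ys)"
  by (subst (1 2) Pbar_tensor_0_eq) (auto simp: rho_def perms_0 pact_def empty_tuple_indicator_def)

lemma nat_trans_0:
  assumes \<phi>: "is_nat_trans 0 0 \<phi>" and v: "v \<in> Pbar_tensor 0 n"
  shows "\<phi> n v = (\<lambda>ys. \<phi> 1 empty_tuple_indicator [] * v ys)"
proof (cases "n = 0")
  case True
  then have "v = (\<lambda>_. 0)" using v unfolding Pbar_tensor_def by simp
  then show ?thesis using nat_trans_zero[OF \<phi>] by simp
next
  case False
  let ?u = "empty_tuple_indicator"
  have u: "?u \<in> Pbar_tensor 0 n" using False by (simp add: empty_tuple_indicator_in_Pbar_tensor)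
  have FAmap_u: "FAmap 0 1 (\<lambda>_. 0) ?u = ?u"
    unfolding FAmap_0 empty_tuple_indicator_def by auto
  have "\<phi> n (FAmap 0 1 (\<lambda>_. 0) ?u) = FAmap 0 1 (\<lambda>_. 0) (\<phi> 1 ?u)"
    using False by (intro nat_trans_FAmap[OF \<phi>] empty_tuple_indicator_in_Pbar_tensor) auto
  then have "\<phi> n ?u = FAmap 0 1 (\<lambda>_. 0) (\<phi> 1 ?u)"
    by (simp only: FAmap_u)
  also have "\<dots> = (\<lambda>ys. \<phi> 1 ?u [] * ?u ys)"
    unfolding FAmap_0 empty_tuple_indicator_def by auto
  finally have "\<phi> n ?u = (\<lambda>ys. \<phi> 1 ?u [] * ?u ys)" .
  moreover have "\<phi> n v = (\<lambda>ys. v [] * \<phi> n ?u ys)"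
    by (subst Pbar_tensor_0_eq[OF v]) (rule nat_trans_smult[OF \<phi> u])
  ultimately show ?thesis
    by (subst (2) Pbar_tensor_0_eq[OF v]) (simp add: ac_simps)
qed

section \<open>Hom-spaces between tensor powers of \<open>\<overline>P\<close>\<close>

lemma nat_trans_vanish:
  assumes st: "s > t" and \<phi>: "is_nat_trans s t \<phi>" and v: "v \<in> Pbar_tensor s n"
  shows "\<phi> n v = (\<lambda>_. 0)"
proof -
  have s: "0 < s" using st by simp
  have "\<phi> (2*s) (gen_tensor s) z = 0" for z
  proof (rule ccontr)
    assume "\<phi> (2*s) (gen_tensor s) z \<noteq> 0"
    then have "{..<s} \<subseteq> (\<lambda>k. z!k div 2) ` {..<t}"
      using nat_trans_gen_tensor_support[OF \<phi> s] by force
    then have "card {..<s} \<le> card ((\<lambda>k. z!k div 2) ` {..<t})"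
      by (intro card_mono) auto
    also have "\<dots> \<le> card {..<t}"
      by (rule card_image_le) simp
    finally show False using st by simp
  qed
  then have "\<phi> (2*s) (gen_tensor s) = (\<lambda>n v. (\<lambda>_. 0)) (2*s) (gen_tensor s)"
    by auto
  then show ?thesis
    using nat_trans_eqI_gen_tensor[OF \<phi> zero_is_nat_trans s _ v] by simp
qed

lemma rho_inj:
  assumes a: "a \<in> kS t" and b: "b \<in> kS t"
    and eq: "\<forall>n. \<forall>v\<in>Pbar_tensor t n. rho t a n v = rho t b n v"
  shows "a = b"
proof
  fix \<sigma>
  show "a \<sigma> = b \<sigma>"
  proof (cases "\<sigma> \<in> perms t")
    case False
    then show ?thesis using a b unfolding kS_def by auto
  next
    case True
    show ?thesis
    proof (cases "t = 0")
      case t: True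
      then have "\<sigma> = id" using True perms_0 by simp
      have u: "empty_tuple_indicator \<in> Pbar_tensor 0 1"
        by (simp add: empty_tuple_indicator_in_Pbar_tensor)
      have "rho 0 c 1 empty_tuple_indicator [] = c id" for c :: "(nat \<Rightarrow> nat) \<Rightarrow> 'a"
        unfolding rho_0[OF u] by (simp add: empty_tuple_indicator_def)
      then show ?thesis
        using eq u t \<open>\<sigma> = id\<close> by metis
    next
      case False
      then have "rho t a (2*t) (gen_tensor t) = rho t b (2*t) (gen_tensor t)"
        using eq gen_tensor_in_Pbar_tensor by blast
      then show ?thesis
        using rho_gen_tensor_doubled_tuple[OF True] by metis
    qed
  qed
qed

lemma rho_surj:
  assumes \<phi>: "is_nat_trans t t \<phi>"
  shows "\<exists>a\<in>kS t. \<forall>n. \<forall>v\<in>Pbar_tensor t n. \<phi> n v = rho t a n v"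
proof (cases "t = 0")
  case True
  define a where "a \<sigma> = (if \<sigma> = id then \<phi> 1 empty_tuple_indicator [] else 0)" for \<sigma> :: "nat \<Rightarrow> nat"
  have "a \<in> kS t"
    unfolding kS_def a_def using True perms_0 by auto
  moreover have "\<phi> n v = rho t a n v" if "v \<in> Pbar_tensor t n" for n v
    using that \<phi> True by (simp add: nat_trans_0 rho_0 a_def)
  ultimately show ?thesis by blast
next
  case False
  then have t: "0 < t" by simp
  define a where "a \<sigma> = (if \<sigma> \<in> perms t then \<phi> (2*t) (gen_tensor t) (doubled_tuple t \<sigma>) else 0)" for \<sigma>
  have "a \<in> kS t"
    unfolding kS_def a_def by auto
  moreover have "\<phi> (2*t) (gen_tensor t) = rho t a (2*t) (gen_tensor t)"
    by (rule nat_trans_gen_tensor_eqI[OF \<phi> rho_is_nat_trans t])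
       (simp add: rho_gen_tensor_doubled_tuple a_def)
  then have "\<phi> n v = rho t a n v" if "v \<in> Pbar_tensor t n" for n v
    by (rule nat_trans_eqI_gen_tensor[OF \<phi> rho_is_nat_trans t _ that])
  ultimately show ?thesis by blast
qed

theorem mainTheorem2:
  fixes s t :: nat
  shows "(s > t \<longrightarrow>
           (\<forall>\<phi> :: nat \<Rightarrow> (nat list \<Rightarrow> 'k::field) \<Rightarrow> nat list \<Rightarrow> 'k.
              is_nat_trans s t \<phi> \<longrightarrow> (\<forall>n. \<forall>v\<in>Pbar_tensor s n. \<phi> n v = (\<lambda>_. 0))))
       \<and> (s = t \<longrightarrow>
           (\<forall>a\<in>(kS t :: ((nat \<Rightarrow> nat) \<Rightarrow> 'k) set). is_nat_trans t t (rho t a))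
         \<and> (\<forall>a\<in>(kS t :: ((nat \<Rightarrow> nat) \<Rightarrow> 'k) set). \<forall>b\<in>kS t.
              (\<forall>n. \<forall>v\<in>Pbar_tensor t n. rho t a n v = rho t b n v) \<longrightarrow> a = b)
         \<and> (\<forall>\<phi> :: nat \<Rightarrow> (nat list \<Rightarrow> 'k) \<Rightarrow> nat list \<Rightarrow> 'k. is_nat_trans t t \<phi> \<longrightarrow>
              (\<exists>a\<in>kS t. \<forall>n. \<forall>v\<in>Pbar_tensor t n. \<phi> n v = rho t a n v))
         \<and> (\<forall>n. \<forall>v\<in>Pbar_tensor t n. rho t (kS_one :: (nat \<Rightarrow> nat) \<Rightarrow> 'k) n v = v)
         \<and> (\<forall>a\<in>(kS t :: ((nat \<Rightarrow> nat) \<Rightarrow> 'k) set). \<forall>b\<in>kS t. \<forall>c::'k. \<forall>n. \<forall>v\<in>Pbar_tensor t n.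
              rho t (\<lambda>\<sigma>. a \<sigma> + c * b \<sigma>) n v = (\<lambda>ys. rho t a n v ys + c * rho t b n v ys))
         \<and> (\<forall>a\<in>(kS t :: ((nat \<Rightarrow> nat) \<Rightarrow> 'k) set). \<forall>b\<in>kS t. \<forall>n. \<forall>v\<in>Pbar_tensor t n.
              rho t (kS_mult t a b) n v = rho t a n (rho t b n v)))"
  apply (intro conjI impI)
  subgoal using nat_trans_vanish by blast
  subgoal using rho_is_nat_trans by blast
  subgoal using rho_inj by blast
  subgoal using rho_surj by blast
  subgoal using rho_kS_one by blast
  subgoal using rho_linear by blast
  subgoal using rho_kS_mult by blast
  done

end
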